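(* Local dominance improvement dynamics for multiple issues need not converge, even if all issues are binary and all agents use the $\ell_\infty$ distance with the same constant uncertainty parameters. One instance: - $p=2$ binary issues, $n=13$ agents, and $(r^1_j,r^2_j)=(1,2)$ for every agent $j$ in every round. - Three agents have ranking $(0,1)\succ(1,1)\succ(1,0)\succ(0,0)$. - Five agents have ranking $(0,0)\succ(0,1)\succ(1,1)\succ(1,0)$. - Four agents have ranking $(1,0)\succ(1,1)\succ(0,0)\succ(0,1)$. - One agent has ranking $(1,1)\succ(1,0)\succ(0,1)\succ(0,0)$. In this instance there is an infinite (cyclic) sequence of LDI steps starting from the truthful vote profile.
   Context: Issues $\mathcal P=\{1,\dots,p\}$ with finite candidate sets $D_i$; binary means $D_i=\{0,1\}$. There are $n$ agents with strict rankings $\succ_j$ over $\mathcal D=\prod_iD_i$, and vote profiles $a\in\mathcal D^n$. The truthful profile has each agent voting for their top alternative. Score tuples and outcomes: - For a score tuple $v=(v^i)_i$ with $v^i\in\mathbb N^{D_i}$, the plurality outcome $f(v)$ picks on each issue the top-scoring candidate, with ties broken lexicographically ($0$ before $1$). - $v+b$ adds one vote for $b^i$ on each issue $i$. - $s_{-j}(a)$ is the score tuple of $a$ without agent $j$. Uncertainty with the $\ell_\infty$ distance and parameters $r_j=(r_j^i)_i$: $$\tilde S_{-j}(a;r_j)=\prod_i\{v^i\in\mathbb N^{D_i}:\max_{c}|v^i(c)-s^i_{-j}(c;a)|\le r^i_j\}.$$ Local dominance: $\hat a_j$ $S$-beats $a_j$ if some $v\in S$ has $f(v+\hat a_j)\succ_j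 f(v+a_j)$. The vote $\hat a_j$ $S$-dominates $a_j$ if it $S$-beats $a_j$ and $a_j$ does not $S$-beat $\hat a_j$. An LDI step of $j$ on issue $i$ at $a$ (with $S=\tilde S_{-j}(a;r_j)$) is a change to a vote that satisfies all of the following: - it $S$-dominates $a_j$; - it differs from $a_j$ only on issue $i$; - it is not $S$-dominated by another vote differing from $a_j$ only on issue $i$. Dynamics: at each round a scheduler selects one agent and one issue on which the agent has an LDI step, and that agent makes it. Convergence means every such sequence is finite from every initial profile. *)

theory Defs
  imports Main
begin

text \<open>Issues are indexed 0..p-1 (issue i of the paper is index i-1).
  D i is the finite candidate set of issue i (candidates are natural numbers; ties are
  broken towards the smallest candidate, i.e. 0 before 1).  A score tuple is a function v :: issue => candidate => nat,
  with v i c = 0 for c outside D i (so v^i is an element of N^{D_i}).\<close>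

type_synonym alt = "nat list"
type_synonym profile = "nat \<Rightarrow> alt"
type_synonym scores = "nat \<Rightarrow> nat \<Rightarrow> nat"

definition is_alt :: "(nat \<Rightarrow> nat set) \<Rightarrow> nat \<Rightarrow> alt \<Rightarrow> bool" where
  "is_alt D p x \<longleftrightarrow> length x = p \<and> (\<forall>i<p. x ! i \<in> D i)"

definition rank_pref :: "alt list \<Rightarrow> alt \<Rightarrow> alt \<Rightarrow> bool" where
  "rank_pref L x y \<longleftrightarrow> (\<exists>k l. k < l \<and> l < length L \<and> L ! k = x \<and> L ! l = y)"

definition plurality :: "(nat \<Rightarrow> nat set) \<Rightarrow> nat \<Rightarrow> scores \<Rightarrow> alt" where
  "plurality D p v = map (\<lambda>i. LEAST c. c \<in> D i \<and> (\<forall>c'\<in>D i. v i c' \<le> v i c)) [0..<p]"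

definition add_vote :: "scores \<Rightarrow> alt \<Rightarrow> scores" where
  "add_vote v b = (\<lambda>i c. v i c + (if i < length b \<and> c = b ! i then 1 else 0))"

definition score_minus :: "nat \<Rightarrow> profile \<Rightarrow> nat \<Rightarrow> nat \<Rightarrow> nat \<Rightarrow> nat" where
  "score_minus n a j i c = card {k. k < n \<and> k \<noteq> j \<and> a k ! i = c}"

definition unc_set :: "(nat \<Rightarrow> nat set) \<Rightarrow> nat \<Rightarrow> nat \<Rightarrow> profile \<Rightarrow> nat \<Rightarrow> (nat \<Rightarrow> nat) \<Rightarrow> scores set" where
  "unc_set D p n a j r =
     {v. (\<forall>i c. (i \<ge> p \<or> c \<notin> D i) \<longrightarrow> v i c = 0) \<and>
         (\<forall>i<p. \<forall>c\<in>D i. \<bar>int (v i c) - int (score_minus n a j i c)\<bar> \<le> int (r i))}"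

definition S_beats :: "(nat \<Rightarrow> nat set) \<Rightarrow> nat \<Rightarrow> (alt \<Rightarrow> alt \<Rightarrow> bool) \<Rightarrow> scores set \<Rightarrow> alt \<Rightarrow> alt \<Rightarrow> bool" where
  "S_beats D p pref S b a \<longleftrightarrow> (\<exists>v\<in>S. pref (plurality D p (add_vote v b)) (plurality D p (add_vote v a)))"

definition S_dominates :: "(nat \<Rightarrow> nat set) \<Rightarrow> nat \<Rightarrow> (alt \<Rightarrow> alt \<Rightarrow> bool) \<Rightarrow> scores set \<Rightarrow> alt \<Rightarrow> alt \<Rightarrow> bool" where
  "S_dominates D p pref S b a \<longleftrightarrow> S_beats D p pref S b a \<and> \<not> S_beats D p pref S a b"

definition differs_only_on :: "nat \<Rightarrow> nat \<Rightarrow> alt \<Rightarrow> alt \<Rightarrow> bool" where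
  "differs_only_on p i b a \<longleftrightarrow> (\<forall>k<p. k \<noteq> i \<longrightarrow> b ! k = a ! k)"

definition LDI_step :: "(nat \<Rightarrow> nat set) \<Rightarrow> nat \<Rightarrow> nat \<Rightarrow> (nat \<Rightarrow> alt \<Rightarrow> alt \<Rightarrow> bool)
     \<Rightarrow> (nat \<Rightarrow> nat \<Rightarrow> nat) \<Rightarrow> profile \<Rightarrow> nat \<Rightarrow> nat \<Rightarrow> alt \<Rightarrow> bool" where
  "LDI_step D p n pref r a j i b \<longleftrightarrow>
     (let S = unc_set D p n a j (r j) in
       is_alt D p b \<and> differs_only_on p i b (a j) \<and>
       S_dominates D p (pref j) S b (a j) \<and>
       \<not> (\<exists>b'. is_alt D p b' \<and> differs_only_on p i b' (a j) \<and> S_dominates D p (pref j) S b' b))"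

definition LDI_move :: "(nat \<Rightarrow> nat set) \<Rightarrow> nat \<Rightarrow> nat \<Rightarrow> (nat \<Rightarrow> alt \<Rightarrow> alt \<Rightarrow> bool)
     \<Rightarrow> (nat \<Rightarrow> nat \<Rightarrow> nat) \<Rightarrow> profile \<Rightarrow> profile \<Rightarrow> bool" where
  "LDI_move D p n pref r a a' \<longleftrightarrow>
     (\<exists>j<n. \<exists>i<p. \<exists>b. LDI_step D p n pref r a j i b \<and> a' = a(j := b))"

definition bin :: "nat \<Rightarrow> nat set" where "bin i = {0, 1}"

definition ranking :: "nat \<Rightarrow> alt list" where
  "ranking j =
    (if j < 3 then [[0,1],[1,1],[1,0],[0,0]]
     else if j < 8 then [[0,0],[0,1],[1,1],[1,0]]
     else if j < 12 then [[1,0],[1,1],[0,0],[0,1]]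
     else [[1,1],[1,0],[0,1],[0,0]])"

definition pref13 :: "nat \<Rightarrow> alt \<Rightarrow> alt \<Rightarrow> bool" where
  "pref13 j = rank_pref (ranking j)"

definition r12 :: "nat \<Rightarrow> nat \<Rightarrow> nat" where
  "r12 j i = (if i = 0 then 1 else 2)"

definition truthful :: "profile" where
  "truthful j = hd (ranking j)"

end

theory Submission
  imports Defs
begin

text \<open>Starting from the truthful profile, the three agents of the first group switch their
  vote on issue 1 to 1 one after another, then the five agents of the second group switch
  their vote on issue 2 to 1, and afterwards both groups switch back in the same order.
  After these 16 moves the truthful profile recurs, so repeating them forever gives an
  infinite run.  That every move is an LDI step is a finite check; it becomes cheap because
  the uncertainty set is a product over the issues and plurality decides each issue on its
  own, so whether one vote beats another only depends on which pairs of winners each issue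
  can produce.\<close>

definition bin_winner :: "nat \<Rightarrow> nat \<Rightarrow> nat" where
  "bin_winner x0 x1 = (if x0 < x1 then 1 else 0)"

lemma Least_bin_winner:
  "(LEAST c. c \<in> {0, 1::nat} \<and> (\<forall>c'\<in>{0, 1}. w c' \<le> (w c :: nat))) = bin_winner (w 0) (w 1)"
  unfolding bin_winner_def by (rule Least_equality) auto

lemma plurality_bin: "plurality bin p v = map (\<lambda>i. bin_winner (v i 0) (v i 1)) [0..<p]"
  unfolding plurality_def bin_def Least_bin_winner ..

definition issue_winner :: "nat \<Rightarrow> nat \<Rightarrow> alt \<Rightarrow> nat \<Rightarrow> nat" where
  "issue_winner x0 x1 b i =
     bin_winner (x0 + of_bool (i < length b \<and> b ! i = 0)) (x1 + of_bool (i < length b \<and> b ! i = 1))"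

lemma plurality_bin2_add_vote:
  "plurality bin 2 (add_vote v b) = [issue_winner (v 0 0) (v 0 1) b 0, issue_winner (v 1 0) (v 1 1) b 1]"
  by (simp add: plurality_bin add_vote_def issue_winner_def numeral_2_eq_2)

(* remdups only keeps the evaluation in cycle_moves_are_LDI_steps small *)
definition winner_pairs :: "nat \<Rightarrow> nat \<Rightarrow> nat \<Rightarrow> alt \<Rightarrow> alt \<Rightarrow> nat \<Rightarrow> (nat \<times> nat) list" where
  "winner_pairs s0 s1 r b c i =
     remdups [(issue_winner x0 x1 b i, issue_winner x0 x1 c i). x0 \<leftarrow> [s0 - r..<s0 + r + 1], x1 \<leftarrow> [s1 - r..<s1 + r + 1]]"

lemma abs_diff_le_iff: "\<bar>int x - int s\<bar> \<le> int r \<longleftrightarrow> x \<in> {s - r..<s + r + 1}"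
  by (simp add: abs_le_iff) linarith

lemma mem_winner_pairs:
  "(u, u') \<in> set (winner_pairs s0 s1 r b c i) \<longleftrightarrow>
     (\<exists>x0 x1. \<bar>int x0 - int s0\<bar> \<le> int r \<and> \<bar>int x1 - int s1\<bar> \<le> int r \<and>
        u = issue_winner x0 x1 b i \<and> u' = issue_winner x0 x1 c i)"
  unfolding winner_pairs_def abs_diff_le_iff set_remdups set_concat set_map set_upt image_image
  by (auto 0 4 intro: image_eqI)

lemma S_beats_unc_set_bin2:
  "S_beats bin 2 P (unc_set bin 2 n a j r) b c \<longleftrightarrow>
     (\<exists>(u, u') \<in> set (winner_pairs (score_minus n a j 0 0) (score_minus n a j 0 1) (r 0) b c 0).
      \<exists>(w, w') \<in> set (winner_pairs (score_minus n a j 1 0) (score_minus n a j 1 1) (r 1) b c 1).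
        P [u, w] [u', w'])"
  (is "?beats \<longleftrightarrow> (\<exists>(u, u') \<in> set ?W0. \<exists>(w, w') \<in> set ?W1. P [u, w] [u', w'])")
proof
  assume ?beats
  then obtain v where v: "v \<in> unc_set bin 2 n a j r"
    and P: "P (plurality bin 2 (add_vote v b)) (plurality bin 2 (add_vote v c))"
    unfolding S_beats_def by blast
  have bound: "\<bar>int (v i x) - int (score_minus n a j i x)\<bar> \<le> int (r i)" if "i < 2" "x < 2" for i x
    using v that unfolding unc_set_def bin_def by (auto simp: less_2_cases_iff)
  have "(issue_winner (v 0 0) (v 0 1) b 0, issue_winner (v 0 0) (v 0 1) c 0) \<in> set ?W0"
    unfolding mem_winner_pairs using bound[of 0 0] bound[of 0 1] by auto
  moreover have "(issue_winner (v 1 0) (v 1 1) b 1, issue_winner (v 1 0) (v 1 1) c 1) \<in> set ?W1"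
    unfolding mem_winner_pairs using bound[of 1 0] bound[of 1 1] by auto
  ultimately show "\<exists>(u, u') \<in> set ?W0. \<exists>(w, w') \<in> set ?W1. P [u, w] [u', w']"
    using P unfolding plurality_bin2_add_vote by blast
next
  assume "\<exists>(u, u') \<in> set ?W0. \<exists>(w, w') \<in> set ?W1. P [u, w] [u', w']"
  then obtain u u' w w' where "(u, u') \<in> set ?W0" "(w, w') \<in> set ?W1" and P: "P [u, w] [u', w']"
    by blast
  then obtain x00 x01 x10 x11 where
    x: "\<bar>int x00 - int (score_minus n a j 0 0)\<bar> \<le> int (r 0)"
       "\<bar>int x01 - int (score_minus n a j 0 1)\<bar> \<le> int (r 0)"
       "\<bar>int x10 - int (score_minus n a j 1 0)\<bar> \<le> int (r 1)"
       "\<bar>int x11 - int (score_minus n a j 1 1)\<bar> \<le> int (r 1)"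
    and uw: "u = issue_winner x00 x01 b 0" "u' = issue_winner x00 x01 c 0"
       "w = issue_winner x10 x11 b 1" "w' = issue_winner x10 x11 c 1"
    unfolding mem_winner_pairs by blast
  define v where "v i x = (if i < 2 \<and> x < 2 then [[x00, x01], [x10, x11]] ! i ! x else 0)" for i x
  have "v \<in> unc_set bin 2 n a j r"
    using x unfolding unc_set_def bin_def by (auto simp: v_def less_2_cases_iff)
  moreover have "plurality bin 2 (add_vote v b) = [u, w]" "plurality bin 2 (add_vote v c) = [u', w']"
    unfolding plurality_bin2_add_vote uw by (simp_all add: v_def)
  ultimately show ?beats
    using P unfolding S_beats_def by metis
qed

lemma rank_pref_Nil [code]: "rank_pref [] x y = False"
  by (simp add: rank_pref_def)

lemma rank_pref_Cons [code]: "rank_pref (z # L) x y \<longleftrightarrow> z = x \<and> y \<in> set L \<or> rank_pref L x y"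
proof
  assume "rank_pref (z # L) x y"
  then obtain k l where "k < l" "l < Suc (length L)" "(z # L) ! k = x" "(z # L) ! l = y"
    unfolding rank_pref_def by auto
  then show "z = x \<and> y \<in> set L \<or> rank_pref L x y"
    unfolding rank_pref_def
    by (cases k; cases l) (auto simp: in_set_conv_nth)
next
  assume "z = x \<and> y \<in> set L \<or> rank_pref L x y"
  then show "rank_pref (z # L) x y"
  proof
    assume "z = x \<and> y \<in> set L"
    then obtain l where "l < length L" "L ! l = y" "z = x"
      by (auto simp: in_set_conv_nth)
    then show ?thesis
      unfolding rank_pref_def by (intro exI[of _ 0] exI[of _ "Suc l"]) simp
  next
    assume "rank_pref L x y"
    then show ?thesis
      unfolding rank_pref_def by (metis Suc_less_eq length_Cons nth_Cons_Suc)
  qed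
qed

lemma is_alt_bin2_iff: "is_alt bin 2 b \<longleftrightarrow> b \<in> set [[0, 0], [0, 1], [1, 0], [1, 1]]"
proof
  assume "is_alt bin 2 b"
  then have "length b = 2" "b ! 0 \<in> {0, 1}" "b ! 1 \<in> {0, 1}"
    unfolding is_alt_def bin_def by auto
  then show "b \<in> set [[0, 0], [0, 1], [1, 0], [1, 1]]"
    by (auto simp: length_Suc_conv numeral_2_eq_2)
qed (auto simp: is_alt_def bin_def less_2_cases_iff)

lemma differs_only_on_code [code]:
  "differs_only_on p i b a \<longleftrightarrow> (\<forall>k \<in> set [0..<p]. k \<noteq> i \<longrightarrow> b ! k = a ! k)"
  unfolding differs_only_on_def by (simp add: Ball_def)

lemma score_minus_code [code]:
  "score_minus n a j i c = length (filter (\<lambda>k. k \<noteq> j \<and> a k ! i = c) [0..<n])"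
proof -
  have "{k. k < n \<and> k \<noteq> j \<and> a k ! i = c} = set (filter (\<lambda>k. k \<noteq> j \<and> a k ! i = c) [0..<n])"
    by auto
  also have "card \<dots> = length (filter (\<lambda>k. k \<noteq> j \<and> a k ! i = c) [0..<n])"
    by (intro distinct_card distinct_filter distinct_upt)
  finally show ?thesis
    unfolding score_minus_def .
qed

lemma LDI_step_bin2_iff:
  "LDI_step bin 2 n pref r a j i b \<longleftrightarrow>
     (let S = unc_set bin 2 n a j (r j); alts = [[0, 0], [0, 1], [1, 0], [1, 1]] in
       b \<in> set alts \<and> differs_only_on 2 i b (a j) \<and> S_dominates bin 2 (pref j) S b (a j) \<and>
       \<not> (\<exists>b' \<in> set alts. differs_only_on 2 i b' (a j) \<and> S_dominates bin 2 (pref j) S b' b))"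
  unfolding LDI_step_def is_alt_bin2_iff by (simp only: Let_def Bex_def)

definition apply_moves :: "profile \<Rightarrow> (nat \<times> nat \<times> alt) list \<Rightarrow> profile" where
  "apply_moves = foldl (\<lambda>a (j, i, b). a(j := b))"

lemma apply_moves_take_Suc:
  assumes "k < length ms" and "ms ! k = (j, i, b)"
  shows "apply_moves a (take (Suc k) ms) = (apply_moves a (take k ms))(j := b)"
  using assms by (simp add: apply_moves_def take_Suc_conv_app_nth)

lemma step_mod_period:
  fixes f :: "nat \<Rightarrow> 'a"
  assumes "f N = f 0" and "\<And>k. k < N \<Longrightarrow> R (f k) (f (Suc k))" and "0 < N"
  shows "R (f (t mod N)) (f (Suc t mod N))"
proof (cases "Suc (t mod N) = N")
  case True
  then have "Suc t mod N = 0"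
    by (simp add: mod_Suc)
  with True assms show ?thesis
    by (metis lessI)
next
  case False
  then have "Suc t mod N = Suc (t mod N)"
    by (simp add: mod_Suc)
  with assms show ?thesis
    by simp
qed

text \<open>A move is (agent, issue, new vote), with issues indexed from 0.\<close>

definition cycle_moves :: "(nat \<times> nat \<times> alt) list" where
  "cycle_moves =
     [(0, 0, [1, 1]), (1, 0, [1, 1]), (2, 0, [1, 1]),
      (3, 1, [0, 1]), (4, 1, [0, 1]), (5, 1, [0, 1]), (6, 1, [0, 1]), (7, 1, [0, 1]),
      (0, 0, [0, 1]), (1, 0, [0, 1]), (2, 0, [0, 1]),
      (3, 1, [0, 0]), (4, 1, [0, 0]), (5, 1, [0, 0]), (6, 1, [0, 0]), (7, 1, [0, 0])]"

lemma cycle_moves_return: "apply_moves truthful cycle_moves = truthful"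
  by (rule ext) (simp add: apply_moves_def cycle_moves_def truthful_def ranking_def)

lemma cycle_moves_are_LDI_steps:
  assumes "k < length cycle_moves" and "cycle_moves ! k = (j, i, b)"
  shows "j < 13 \<and> i < 2 \<and> LDI_step bin 2 13 pref13 r12 (apply_moves truthful (take k cycle_moves)) j i b"
proof -
  have "\<forall>k \<in> {0..<length cycle_moves}. case cycle_moves ! k of (j, i, b) \<Rightarrow>
          j < 13 \<and> i < 2 \<and> LDI_step bin 2 13 pref13 r12 (apply_moves truthful (take k cycle_moves)) j i b"
    unfolding LDI_step_bin2_iff Let_def S_dominates_def S_beats_unc_set_bin2 by code_simp
  then have "case cycle_moves ! k of (j, i, b) \<Rightarrow>
      j < 13 \<and> i < 2 \<and> LDI_step bin 2 13 pref13 r12 (apply_moves truthful (take k cycle_moves)) j i b"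
    using assms(1) by simp
  then show ?thesis
    unfolding assms(2) by simp
qed

theorem proposition2:
  shows "\<exists>a :: nat \<Rightarrow> profile. a 0 = truthful \<and>
           (\<forall>t. LDI_move bin 2 13 pref13 r12 (a t) (a (Suc t)))"
proof -
  define f where "f k = apply_moves truthful (take k cycle_moves)" for k
  have length_cycle: "length cycle_moves = 16"
    by (simp add: cycle_moves_def)
  have move: "LDI_move bin 2 13 pref13 r12 (f k) (f (Suc k))" if "k < 16" for k
  proof -
    obtain j i b where jib: "cycle_moves ! k = (j, i, b)"
      by (metis prod_cases3)
    have k: "k < length cycle_moves"
      using that length_cycle by simp
    show ?thesis
      using cycle_moves_are_LDI_steps[OF k jib] apply_moves_take_Suc[OF k jib]
      unfolding LDI_move_def f_def by blast
  qed
  have f0: "f 0 = truthful"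
    by (simp add: f_def apply_moves_def)
  with cycle_moves_return length_cycle have "f 16 = f 0"
    by (simp add: f_def)
  then have "LDI_move bin 2 13 pref13 r12 (f (t mod 16)) (f (Suc t mod 16))" for t
    using move by (rule step_mod_period[where R = "LDI_move bin 2 13 pref13 r12"]) simp_all
  with f0 show ?thesis
    by (intro exI[of _ "\<lambda>t. f (t mod 16)"]) simp
qed

end
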